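(* For every prime power $q$, all integers $n$, $r \le \lfloor n/2 \rfloor$ and $0 \le t \le r$, $$q^{t(n-t)} \le V_{\mathrm{C}}(t) < K_q^{-2}\, q^{t(n-t)}.$$
   Context: For integers $0\le k\le m$, ${m \brack k} = \prod_{i=0}^{k-1}\frac{q^m - q^i}{q^k - q^i}$ is the Gaussian binomial coefficient. $K_q = \prod_{j=1}^\infty (1 - q^{-j})$. For $0 \le d \le r$, $N_{\mathrm{C}}(d) = q^{d^2}{r \brack d}{n-r \brack d}$ (the number of $r$-dimensional subspaces of $\mathrm{GF}(q)^n$ at injection distance $d$ from a given one, where $d_{\mathrm{I}}(U,V) = \dim(U+V) - \min\{\dim U,\dim V\}$), and $V_{\mathrm{C}}(t) = \sum_{d=0}^t N_{\mathrm{C}}(d)$. *)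

theory Defs
  imports "HOL-Analysis.Analysis"
begin

definition gauss_binom :: "nat \<Rightarrow> nat \<Rightarrow> nat \<Rightarrow> real" where
  "gauss_binom q m k = (\<Prod>i<k. (real q ^ m - real q ^ i) / (real q ^ k - real q ^ i))"

definition K_const :: "nat \<Rightarrow> real" where
  "K_const q = (\<Prod>j. (1 - 1 / real q ^ Suc j))"

definition N_C :: "nat \<Rightarrow> nat \<Rightarrow> nat \<Rightarrow> nat \<Rightarrow> real" where
  "N_C q n r d = real q ^ (d^2) * gauss_binom q r d * gauss_binom q (n - r) d"

definition V_C :: "nat \<Rightarrow> nat \<Rightarrow> nat \<Rightarrow> nat \<Rightarrow> real" where
  "V_C q n r t = (\<Sum>d\<le>t. N_C q n r d)"

definition prime_power :: "nat \<Rightarrow> bool" where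
  "prime_power q \<longleftrightarrow> (\<exists>p k. prime p \<and> k \<ge> 1 \<and> q = p ^ k)"

end

theory Submission
  imports Defs
begin

text \<open>
  Each of the k factors (q^(m-k+i) - 1) / (q^i - 1), 1 \<le> i \<le> k, of the Gaussian binomial
  [m, k] lies between q^(m-k) and q^(m-k) / (1 - q^-i), hence
  q^(k(m-k)) \<le> [m, k] \<le> q^(k(m-k)) / (1 - q^-1)...(1 - q^-k) < q^(k(m-k)) / K_q.
  The lower bound on V_C(t) comes from its last term N_C(t) alone. For the upper bound,
  [r, t] [t, d] = [r, d] [r-d, t-d] \<ge> [r, d], so
  V_C(t) \<le> [r, t] \<Sum>d. q^(d^2) [t, d] [n-r, d] = [r, t] [n-r+t, t]
  by the q-Vandermonde identity, and both factors are bounded as above.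
\<close>

text \<open>(Q - 1)^j times the Q-factorial; the normalisation cancels in \<open>qbinom\<close>.\<close>
definition qfact :: "real \<Rightarrow> nat \<Rightarrow> real" where
  "qfact Q j = (\<Prod>i<j. Q ^ Suc i - 1)"

definition qbinom :: "real \<Rightarrow> nat \<Rightarrow> nat \<Rightarrow> real" where
  "qbinom Q m k = (if k \<le> m then qfact Q m / (qfact Q k * qfact Q (m - k)) else 0)"

lemma qfact_0 [simp]: "qfact Q 0 = 1"
  by (simp add: qfact_def)

lemma qfact_Suc: "qfact Q (Suc j) = qfact Q j * (Q ^ Suc j - 1)"
  by (simp add: qfact_def)

lemma one_less_power_Suc: "1 < (Q::real) \<Longrightarrow> 1 < Q ^ Suc j"
  by (rule one_less_power) simp_all

lemma qfact_pos: "1 < Q \<Longrightarrow> 0 < qfact Q j"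
  unfolding qfact_def by (intro prod_pos) (use one_less_power_Suc in force)

lemma qfact_add: "qfact Q (a + k) = qfact Q a * (\<Prod>i<k. Q ^ (a + Suc i) - 1)"
  by (induction k) (simp_all add: qfact_Suc)

lemma qbinom_prod:
  assumes "1 < Q"
  shows "qbinom Q (a + k) k = (\<Prod>i<k. (Q ^ (a + Suc i) - 1) / (Q ^ Suc i - 1))"
  using qfact_pos[OF assms, of a]
  by (simp add: qbinom_def qfact_add prod_dividef qfact_def[of Q k])

lemma qbinom_Pascal:
  assumes "1 < Q"
  shows "qbinom Q (Suc m) (Suc k) = qbinom Q m k + Q ^ Suc k * qbinom Q m (Suc k)"
proof (cases "k < m")
  case True
  then obtain s where m: "m = Suc (k + s)" and diffs: "m - k = Suc s" "m - Suc k = s"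
    by (metis Suc_diff_Suc add_diff_cancel_left' diff_Suc_Suc less_iff_Suc_add)
  define u v where "u = Q ^ Suc k - 1" and "v = Q ^ Suc s - 1"
  have pows: "Q ^ Suc k = u + 1" "Q ^ Suc m = (u + 1) * (v + 1)"
    unfolding u_def v_def m by (simp_all flip: power_add)
  have "qfact Q (Suc m) = qfact Q m * ((u + 1) * (v + 1) - 1)"
    "qfact Q (Suc k) = qfact Q k * u" "qfact Q (Suc s) = qfact Q s * v"
    by (simp_all only: qfact_Suc pows(2)) (simp_all add: u_def v_def)
  then have expand: "qbinom Q (Suc m) (Suc k)
      = qfact Q m * ((u + 1) * (v + 1) - 1) / (qfact Q k * u * (qfact Q s * v))"
    "qbinom Q m k = qfact Q m / (qfact Q k * (qfact Q s * v))"
    "qbinom Q m (Suc k) = qfact Q m / (qfact Q k * u * qfact Q s)"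
    using True diffs by (simp_all add: qbinom_def)
  have "u > 0" "v > 0"
    unfolding u_def v_def using one_less_power_Suc[OF assms] by auto
  then show ?thesis
    unfolding pows(1) expand
    using qfact_pos[OF assms, of k] qfact_pos[OF assms, of s] by (simp add: field_simps)
next
  case False
  then show ?thesis
    using qfact_pos[OF assms, of m] qfact_pos[OF assms, of "Suc m"] by (auto simp: qbinom_def)
qed

lemma qbinom_0_left: "qbinom Q 0 k = (if k = 0 then 1 else 0)"
  by (simp add: qbinom_def)

lemma qbinom_0_right [simp]: "1 < Q \<Longrightarrow> qbinom Q m 0 = 1"
  using qfact_pos[of Q m] by (simp add: qbinom_def)

lemma qbinom_eq_0: "m < k \<Longrightarrow> qbinom Q m k = 0"
  by (simp add: qbinom_def)

lemma qbinom_symmetric: "k \<le> m \<Longrightarrow> qbinom Q m (m - k) = qbinom Q m k"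
  by (simp add: qbinom_def mult.commute)

lemma qbinom_Vandermonde:
  assumes "1 < Q"
  shows "qbinom Q (a + b) k = (\<Sum>j\<le>k. Q ^ ((a - j) * (k - j)) * qbinom Q a j * qbinom Q b (k - j))"
proof (induction a arbitrary: k)
  case 0
  have "(\<Sum>j\<le>k. Q ^ ((0 - j) * (k - j)) * qbinom Q 0 j * qbinom Q b (k - j))
      = (\<Sum>j\<le>k. if j = 0 then qbinom Q b k else 0)"
    by (intro sum.cong) (auto simp: qbinom_0_left)
  then show ?case
    by simp
next
  case (Suc a)
  define T where "T a k j = Q ^ ((a - j) * (k - j)) * qbinom Q a j * qbinom Q b (k - j)" for a k j
  show ?case
  proof (cases k)
    case 0
    then show ?thesis
      using assms by simp
  next
    case (Suc l)
    have shift: "Q ^ Suc l * T a (Suc l) (Suc j)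
        = Q ^ ((a - j) * (l - j)) * (Q ^ Suc j * qbinom Q a (Suc j)) * qbinom Q b (l - j)"
      if jk: "j \<le> l" for j
    proof (cases "Suc j \<le> a")
      case True
      obtain e c where "a = Suc j + e" "l = j + c"
        using le_Suc_ex[OF True] le_Suc_ex[OF jk] by blast
      then have "Suc l + (a - Suc j) * (l - j) = (a - j) * (l - j) + Suc j"
        by simp
      then have "Q ^ Suc l * Q ^ ((a - Suc j) * (l - j)) = Q ^ ((a - j) * (l - j)) * Q ^ Suc j"
        by (simp flip: power_add)
      then show ?thesis
        by (simp only: T_def diff_Suc_Suc mult.assoc[symmetric])
    qed (simp add: T_def qbinom_eq_0)
    have "qbinom Q (Suc a + b) (Suc l) = qbinom Q (a + b) l + Q ^ Suc l * qbinom Q (a + b) (Suc l)"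
      using qbinom_Pascal[OF assms] by simp
    also have "\<dots> = (\<Sum>j\<le>l. T a l j) + Q ^ Suc l * (T a (Suc l) 0 + (\<Sum>j\<le>l. T a (Suc l) (Suc j)))"
      unfolding Suc.IH T_def sum.atMost_Suc_shift ..
    also have "\<dots> = Q ^ Suc l * T a (Suc l) 0 + (\<Sum>j\<le>l. T a l j + Q ^ Suc l * T a (Suc l) (Suc j))"
      by (simp add: sum.distrib sum_distrib_left distrib_left)
    also have "\<dots> = T (Suc a) (Suc l) 0 + (\<Sum>j\<le>l. T (Suc a) (Suc l) (Suc j))"
    proof -
      have "Q ^ Suc l * Q ^ (a * Suc l) = Q ^ (Suc a * Suc l)"
        unfolding power_add[symmetric] by (simp add: algebra_simps)
      then have "Q ^ Suc l * T a (Suc l) 0 = T (Suc a) (Suc l) 0"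
        using assms by (simp add: T_def)
      moreover have "T a l j + Q ^ Suc l * T a (Suc l) (Suc j) = T (Suc a) (Suc l) (Suc j)" if "j \<le> l" for j
        using shift[OF that] by (simp add: T_def qbinom_Pascal[OF assms] distrib_left distrib_right)
      ultimately show ?thesis
        by simp
    qed
    also have "\<dots> = (\<Sum>j\<le>Suc l. T (Suc a) (Suc l) j)"
      by (rule sum.atMost_Suc_shift[symmetric])
    finally show ?thesis
      unfolding T_def Suc .
  qed
qed

lemma qbinom_Vandermonde_diagonal:
  assumes "1 < Q"
  shows "qbinom Q (m + t) t = (\<Sum>d\<le>t. Q ^ (d\<^sup>2) * qbinom Q t d * qbinom Q m d)"
proof -
  have "qbinom Q (t + m) t = (\<Sum>j\<le>t. Q ^ ((t - j) * (t - j)) * qbinom Q t j * qbinom Q m (t - j))"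
    by (rule qbinom_Vandermonde[OF assms])
  also have "\<dots> = (\<Sum>d\<le>t. Q ^ (d * d) * qbinom Q t (t - d) * qbinom Q m d)"
    by (rule sum.reindex_bij_witness[of _ "\<lambda>d. t - d" "\<lambda>j. t - j"]) auto
  finally show ?thesis
    by (simp add: add.commute power2_eq_square qbinom_symmetric)
qed

lemma gauss_binom_eq_qbinom:
  assumes "1 < q"
  shows "gauss_binom q m k = qbinom (real q) m k"
proof (cases "k \<le> m")
  case True
  define Q where "Q = real q"
  have Q: "1 < Q"
    using assms by (simp add: Q_def)
  obtain a where m: "m = a + k"
    using le_Suc_ex[OF True] by (auto simp: add.commute)
  have "(Q ^ m - Q ^ i) / (Q ^ k - Q ^ i) = (Q ^ (a + Suc (k - Suc i)) - 1) / (Q ^ Suc (k - Suc i) - 1)"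
    if "i < k" for i
  proof -
    have "a + Suc (k - Suc i) + i = m" "Suc (k - Suc i) + i = k"
      using that m by simp_all
    then have "Q ^ m = Q ^ (a + Suc (k - Suc i)) * Q ^ i" "Q ^ k = Q ^ Suc (k - Suc i) * Q ^ i"
      by (simp_all only: flip: power_add)
    moreover have "(x * p - p) / (y * p - p) = (x - 1) / (y - 1)" if "p \<noteq> 0" for x y p :: real
    proof -
      have "x * p - p = (x - 1) * p" "y * p - p = (y - 1) * p"
        by (simp_all add: algebra_simps)
      then show ?thesis
        using that by simp
    qed
    ultimately show ?thesis
      using Q by simp
  qed
  then have "gauss_binom q m k = (\<Prod>i<k. (Q ^ (a + Suc (k - Suc i)) - 1) / (Q ^ Suc (k - Suc i) - 1))"
    unfolding gauss_binom_def Q_def by (intro prod.cong) auto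
  also have "\<dots> = qbinom Q m k"
    unfolding m qbinom_prod[OF Q] by (rule prod.nat_diff_reindex)
  finally show ?thesis
    unfolding Q_def .
next
  case False
  then have "gauss_binom q m k = 0"
    unfolding gauss_binom_def by (intro prod_zero) (auto intro: bexI[of _ m])
  with False show ?thesis
    by (simp add: qbinom_def)
qed

lemma qbinom_factor_bounds:
  fixes Q :: real
  assumes "1 < Q"
  shows "Q ^ a \<le> (Q ^ (a + Suc j) - 1) / (Q ^ Suc j - 1)"
    and "(Q ^ (a + Suc j) - 1) / (Q ^ Suc j - 1) \<le> Q ^ a / (1 - 1 / Q ^ Suc j)"
proof -
  define x where "x = Q ^ Suc j"
  have x: "1 < x" and y: "1 \<le> Q ^ a" and xy: "Q ^ (a + Suc j) = Q ^ a * x"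
    unfolding x_def using assms one_less_power_Suc by (simp_all add: power_add)
  have "Q ^ a * (x - 1) \<le> Q ^ a * x - 1"
    using y by (simp add: algebra_simps)
  then show "Q ^ a \<le> (Q ^ (a + Suc j) - 1) / (Q ^ Suc j - 1)"
    using x unfolding xy x_def[symmetric] by (simp add: le_divide_eq)
  have "(Q ^ a * x - 1) / (x - 1) \<le> Q ^ a * x / (x - 1)"
    using x by (intro divide_right_mono) auto
  also have "\<dots> = Q ^ a / (1 - 1 / x)"
    using x by (simp add: field_simps)
  finally show "(Q ^ (a + Suc j) - 1) / (Q ^ Suc j - 1) \<le> Q ^ a / (1 - 1 / Q ^ Suc j)"
    unfolding xy x_def[symmetric] .
qed

lemma qbinom_ge_power:
  assumes "1 < Q" "k \<le> m"
  shows "Q ^ (k * (m - k)) \<le> qbinom Q m k"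
proof -
  obtain a where m: "m = a + k"
    using le_Suc_ex[OF assms(2)] by (auto simp: add.commute)
  have "Q ^ (k * (m - k)) = (\<Prod>i<k. Q ^ a)"
    by (simp add: m power_mult mult.commute)
  also have "\<dots> \<le> (\<Prod>i<k. (Q ^ (a + Suc i) - 1) / (Q ^ Suc i - 1))"
  proof (rule prod_mono)
    fix i
    show "0 \<le> Q ^ a \<and> Q ^ a \<le> (Q ^ (a + Suc i) - 1) / (Q ^ Suc i - 1)"
      using assms(1) qbinom_factor_bounds(1)[OF assms(1), of a i] by simp
  qed
  finally show ?thesis
    unfolding m qbinom_prod[OF assms(1)] .
qed

lemma qbinom_ge_one: "1 < Q \<Longrightarrow> k \<le> m \<Longrightarrow> 1 \<le> qbinom Q m k"
  using qbinom_ge_power[of Q k m] one_le_power[of Q "k * (m - k)"] by linarith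

lemma qbinom_nonneg: "1 < Q \<Longrightarrow> 0 \<le> qbinom Q m k"
  using qbinom_ge_one[of Q k m] by (cases "k \<le> m") (simp_all add: qbinom_eq_0)

definition qpoch :: "real \<Rightarrow> nat \<Rightarrow> real" where
  "qpoch Q k = (\<Prod>i<k. 1 - 1 / Q ^ Suc i)"

lemma qpoch_factor_bounds:
  fixes Q :: real
  assumes "1 < Q"
  shows "0 < 1 - 1 / Q ^ Suc i" "1 - 1 / Q ^ Suc i < 1"
  using one_less_power_Suc[OF assms, of i] by simp_all

lemma qpoch_pos: "1 < Q \<Longrightarrow> 0 < qpoch Q k"
  unfolding qpoch_def using qpoch_factor_bounds by (intro prod_pos) blast

lemma qbinom_le_power_div_qpoch:
  assumes "1 < Q" "k \<le> m"
  shows "qbinom Q m k \<le> Q ^ (k * (m - k)) / qpoch Q k"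
proof -
  obtain a where m: "m = a + k"
    using le_Suc_ex[OF assms(2)] by (auto simp: add.commute)
  have "qbinom Q m k \<le> (\<Prod>i<k. Q ^ a / (1 - 1 / Q ^ Suc i))"
    unfolding m qbinom_prod[OF assms(1)]
  proof (rule prod_mono)
    fix i
    have "0 \<le> Q ^ a"
      using assms(1) by simp
    then show "0 \<le> (Q ^ (a + Suc i) - 1) / (Q ^ Suc i - 1) \<and>
        (Q ^ (a + Suc i) - 1) / (Q ^ Suc i - 1) \<le> Q ^ a / (1 - 1 / Q ^ Suc i)"
      using qbinom_factor_bounds[OF assms(1), of a i] by linarith
  qed
  also have "\<dots> = Q ^ (k * (m - k)) / qpoch Q k"
    by (simp add: m qpoch_def prod_dividef power_mult mult.commute)
  finally show ?thesis .
qed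

lemma prodinf_qpoch_bounds:
  assumes "1 < Q"
  shows "0 < (\<Prod>j. 1 - 1 / Q ^ Suc j)" and "(\<Prod>j. 1 - 1 / Q ^ Suc j) < qpoch Q k"
proof -
  define f where "f = (\<lambda>j. 1 - 1 / Q ^ Suc j)"
  have f: "0 < f j" "f j < 1" for j
    unfolding f_def using qpoch_factor_bounds[OF assms] by auto
  have "summable (\<lambda>j. (1 / Q) * (1 / Q) ^ j)"
    using assms by (intro summable_mult summable_geometric) auto
  then have "summable (\<lambda>j. norm (f j - 1))"
    using assms by (simp add: f_def power_one_over)
  then have conv: "convergent_prod f"
    by (intro abs_convergent_prod_imp_convergent_prod) (simp add: abs_convergent_prod_conv_summable)
  show "0 < (\<Prod>j. 1 - 1 / Q ^ Suc j)"
    using has_prod_pos[OF convergent_prod_has_prod[OF conv] f(1)] unfolding f_def .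
  have "prodinf f \<le> qpoch Q (Suc k)"
  proof (rule prodinf_le_const[OF conv])
    fix n assume "Suc k \<le> n"
    then show "prod f {..<n} \<le> qpoch Q (Suc k)"
    proof (induction rule: dec_induct)
      case (step n)
      have "prod f {..<Suc n} \<le> prod f {..<n}"
        using f by (simp add: mult_left_le prod_nonneg less_imp_le)
      with step.IH show ?case
        by linarith
    qed (simp add: qpoch_def f_def)
  qed
  also have "\<dots> = qpoch Q k * f k"
    by (simp add: qpoch_def f_def)
  also have "\<dots> < qpoch Q k"
    using qpoch_pos[OF assms, of k] f(2)[of k] by simp
  finally show "(\<Prod>j. 1 - 1 / Q ^ Suc j) < qpoch Q k"
    unfolding f_def .
qed

lemma qbinom_mult_qbinom:
  assumes "1 < Q" "d \<le> t" "t \<le> r"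
  shows "qbinom Q r t * qbinom Q t d = qbinom Q r d * qbinom Q (r - d) (t - d)"
proof -
  have "r - d - (t - d) = r - t"
    using assms by simp
  moreover have "qfact Q j \<noteq> 0" for j
    using qfact_pos[OF assms(1)] by (metis less_irrefl)
  ultimately show ?thesis
    using assms by (simp add: qbinom_def)
qed

lemma qbinom_le_mult:
  assumes "1 < Q" "d \<le> t" "t \<le> r"
  shows "qbinom Q r d \<le> qbinom Q r t * qbinom Q t d"
proof -
  have "qbinom Q r d * 1 \<le> qbinom Q r d * qbinom Q (r - d) (t - d)"
    using assms qbinom_nonneg qbinom_ge_one by (intro mult_left_mono) auto
  then show ?thesis
    using qbinom_mult_qbinom[OF assms] by simp
qed

lemma power_le_sum_qbinom:
  assumes "1 < Q" "t \<le> r" "t \<le> m"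
  shows "Q ^ (t * (r + m - t)) \<le> (\<Sum>d\<le>t. Q ^ (d\<^sup>2) * qbinom Q r d * qbinom Q m d)"
proof -
  obtain a b where "r = t + a" "m = t + b"
    using assms le_Suc_ex by metis
  then have "t * (r + m - t) = t\<^sup>2 + t * (r - t) + t * (m - t)"
    by (simp add: power2_eq_square algebra_simps)
  then have "Q ^ (t * (r + m - t)) = Q ^ (t\<^sup>2) * Q ^ (t * (r - t)) * Q ^ (t * (m - t))"
    by (simp add: power_add)
  also have "\<dots> \<le> Q ^ (t\<^sup>2) * qbinom Q r t * qbinom Q m t"
    using assms qbinom_ge_power[OF assms(1)]
    by (intro mult_mono mult_left_mono) (auto intro: mult_nonneg_nonneg qbinom_nonneg)
  also have "\<dots> \<le> (\<Sum>d\<le>t. Q ^ (d\<^sup>2) * qbinom Q r d * qbinom Q m d)"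
    using assms(1) qbinom_nonneg by (intro member_le_sum) auto
  finally show ?thesis .
qed

lemma sum_qbinom_le_power_div_qpoch:
  assumes "1 < Q" "t \<le> r"
  shows "(\<Sum>d\<le>t. Q ^ (d\<^sup>2) * qbinom Q r d * qbinom Q m d)
    \<le> Q ^ (t * (r + m - t)) / qpoch Q t ^ 2"
proof -
  have "(\<Sum>d\<le>t. Q ^ (d\<^sup>2) * qbinom Q r d * qbinom Q m d)
      \<le> (\<Sum>d\<le>t. qbinom Q r t * (Q ^ (d\<^sup>2) * qbinom Q t d * qbinom Q m d))"
  proof (rule sum_mono)
    fix d assume "d \<in> {..t}"
    then have "qbinom Q r d \<le> qbinom Q r t * qbinom Q t d"
      using qbinom_le_mult[OF assms(1) _ assms(2)] by simp
    then have "Q ^ (d\<^sup>2) * qbinom Q r d * qbinom Q m d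
        \<le> Q ^ (d\<^sup>2) * (qbinom Q r t * qbinom Q t d) * qbinom Q m d"
      using assms(1) qbinom_nonneg[OF assms(1)] by (intro mult_right_mono mult_left_mono) auto
    then show "Q ^ (d\<^sup>2) * qbinom Q r d * qbinom Q m d
        \<le> qbinom Q r t * (Q ^ (d\<^sup>2) * qbinom Q t d * qbinom Q m d)"
      by (simp only: ac_simps)
  qed
  also have "\<dots> = qbinom Q r t * qbinom Q (m + t) t"
    by (simp add: qbinom_Vandermonde_diagonal[OF assms(1)] sum_distrib_left)
  also have "\<dots> \<le> Q ^ (t * (r - t)) / qpoch Q t * (Q ^ (t * m) / qpoch Q t)"
    using qbinom_le_power_div_qpoch[OF assms(1), of t "m + t"] qbinom_le_power_div_qpoch[OF assms]
      qbinom_nonneg[OF assms(1)] qpoch_pos[OF assms(1)] assms(1)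
    by (intro mult_mono) (auto intro!: divide_nonneg_pos)
  also have "\<dots> = Q ^ (t * (r + m - t)) / qpoch Q t ^ 2"
  proof -
    have "t * (r + m - t) = t * (r - t) + t * m"
      using assms(2) by (simp add: diff_mult_distrib2 add_mult_distrib2)
    then show ?thesis
      by (simp add: power2_eq_square power_add)
  qed
  finally show ?thesis .
qed

theorem lemma3:
  fixes q n r t :: nat
  assumes "prime_power q" and "r \<le> n div 2" and "t \<le> r"
  shows "real q ^ (t * (n - t)) \<le> V_C q n r t \<and>
         V_C q n r t < real q ^ (t * (n - t)) / (K_const q)^2"
proof -
  obtain p k where "prime p" "1 \<le> k" "q = p ^ k"
    using assms(1) unfolding prime_power_def by blast
  then have q: "1 < real q"
    using prime_gt_1_nat by simp
  have n: "n = r + (n - r)" and "t \<le> n - r"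
    using assms(2,3) by auto
  have V: "V_C q n r t = (\<Sum>d\<le>t. real q ^ (d\<^sup>2) * qbinom (real q) r d * qbinom (real q) (n - r) d)"
    using q by (simp add: V_C_def N_C_def gauss_binom_eq_qbinom)
  have K: "0 < K_const q" "K_const q < qpoch (real q) t"
    unfolding K_const_def using prodinf_qpoch_bounds[OF q] by auto
  have "V_C q n r t \<le> real q ^ (t * (n - t)) / qpoch (real q) t ^ 2"
    using sum_qbinom_le_power_div_qpoch[OF q assms(3), of "n - r"] n by (simp add: V)
  also have "\<dots> < real q ^ (t * (n - t)) / K_const q ^ 2"
    using K q by (intro divide_strict_left_mono power_strict_mono) auto
  finally show ?thesis
    using power_le_sum_qbinom[OF q assms(3) \<open>t \<le> n - r\<close>] n by (simp add: V)
qed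

end
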